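(* Let $n=2$ and let $I_1,I_2$ be independent Bernoulli random variables with $\Pr[I_i=1]=p_i\in(0,1)$, $q_i=1-p_i$, and set $I_3=(1-I_1)(1-I_2)$. For positive reals $\pi_1,\pi_2,\pi_3>0$ consider the Tavin scheme with active administrator, with compensations $$W_i=(\pi_1+\pi_2+\pi_3)\,\frac{\pi_iI_i}{\pi_1I_1+\pi_2I_2+\pi_3I_3},\qquad i=1,2,3.$$ Then $E[W_i]=\pi_i$ for $i=1,2,3$ if and only if $$\pi_1=\pi_3\,\frac{p_1}{q_1}\,\frac{1-q_1q_2}{p_1q_2+p_2q_1},\qquad \pi_2=\pi_3\,\frac{p_2}{q_2}\,\frac{1-q_1q_2}{p_1q_2+p_2q_1}.$$ In particular, the set of positive investment vectors making this scheme actuarially fair for all three agents is exactly the set of vectors of this form with $\pi_3>0$ arbitrary.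
   Context: Note that $\pi_1I_1+\pi_2I_2+\pi_3I_3>0$ always, since $I_3=1$ exactly when $I_1=I_2=0$. *)

theory Defs
  imports "HOL-Probability.Probability"
begin

definition tavin_dist :: "real \<Rightarrow> real \<Rightarrow> (bool \<times> bool) pmf" where
  "tavin_dist p1 p2 = pair_pmf (bernoulli_pmf p1) (bernoulli_pmf p2)"

definition tavin_I :: "nat \<Rightarrow> bool \<times> bool \<Rightarrow> real" where
  "tavin_I i \<omega> =
     (if i = 1 then of_bool (fst \<omega>)
      else if i = 2 then of_bool (snd \<omega>)
      else (1 - of_bool (fst \<omega>)) * (1 - of_bool (snd \<omega>)))"

definition tavin_pi :: "real \<times> real \<times> real \<Rightarrow> nat \<Rightarrow> real" where
  "tavin_pi \<pi> i = (if i = 1 then fst \<pi> else if i = 2 then fst (snd \<pi>) else snd (snd \<pi>))"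

definition tavin_W :: "real \<times> real \<times> real \<Rightarrow> nat \<Rightarrow> bool \<times> bool \<Rightarrow> real" where
  "tavin_W \<pi> i \<omega> =
     (tavin_pi \<pi> 1 + tavin_pi \<pi> 2 + tavin_pi \<pi> 3) * (tavin_pi \<pi> i * tavin_I i \<omega>) /
     (tavin_pi \<pi> 1 * tavin_I 1 \<omega> + tavin_pi \<pi> 2 * tavin_I 2 \<omega> + tavin_pi \<pi> 3 * tavin_I 3 \<omega>)"

definition tavin_fair :: "real \<Rightarrow> real \<Rightarrow> real \<times> real \<times> real \<Rightarrow> bool" where
  "tavin_fair p1 p2 \<pi> \<longleftrightarrow>
     (\<forall>i\<in>{1,2,3::nat}. measure_pmf.expectation (tavin_dist p1 p2) (tavin_W \<pi> i) = tavin_pi \<pi> i)"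

end

theory Submission
  imports Defs
begin

text \<open>Write \<open>S = \<pi>\<^sub>1 + \<pi>\<^sub>2 + \<pi>\<^sub>3\<close>. Agent 3 is paid \<open>S\<close> exactly when both
  Bernoulli trials fail, so \<open>E[W\<^sub>3] = \<pi>\<^sub>3\<close> says \<open>\<pi>\<^sub>1 + \<pi>\<^sub>2 = (1 - q\<^sub>1q\<^sub>2) S\<close>.
  Agent 1 is paid \<open>S\<close> when only trial 1 succeeds and \<open>S \<pi>\<^sub>1/(\<pi>\<^sub>1 + \<pi>\<^sub>2)\<close> when both
  succeed; given the first relation, \<open>E[W\<^sub>1] = \<pi>\<^sub>1\<close> becomes the linear condition
  \<open>\<pi>\<^sub>1 (p\<^sub>1q\<^sub>2 + p\<^sub>2q\<^sub>1) = p\<^sub>1q\<^sub>2 (\<pi>\<^sub>1 + \<pi>\<^sub>2)\<close>, and symmetrically for agent 2: the pot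
  \<open>\<pi>\<^sub>1 + \<pi>\<^sub>2\<close> is split in the ratio of the probabilities that only trial \<open>i\<close> succeeds.\<close>

lemma expectation_tavin_dist:
  assumes "0 \<le> p1" "p1 \<le> 1" "0 \<le> p2" "p2 \<le> 1"
  shows "measure_pmf.expectation (tavin_dist p1 p2) f =
    p1 * p2 * f (True, True) + p1 * (1 - p2) * f (True, False) +
    (1 - p1) * p2 * f (False, True) + (1 - p1) * (1 - p2) * f (False, False)"
proof -
  have "measure_pmf.expectation (tavin_dist p1 p2) f = (\<Sum>\<omega>\<in>UNIV. f \<omega> * pmf (tavin_dist p1 p2) \<omega>)"
    by (rule integral_measure_pmf_real) auto
  also have "\<dots> = (\<Sum>\<omega>\<in>UNIV \<times> UNIV. f \<omega> * pmf (tavin_dist p1 p2) \<omega>)"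
    by simp
  finally show ?thesis
    using assms by (simp add: UNIV_bool tavin_dist_def pmf_pair algebra_simps del: UNIV_Times_UNIV)
qed

lemma tavin_W_eq:
  assumes "0 < a" "0 < b" "0 < c"
  defines "S \<equiv> a + b + c"
  shows "tavin_W (a, b, c) 1 = (\<lambda>\<omega>. if \<omega> = (True, True) then S * (a / (a + b))
           else if \<omega> = (True, False) then S else 0)"
    and "tavin_W (a, b, c) 2 = (\<lambda>\<omega>. if \<omega> = (True, True) then S * (b / (a + b))
           else if \<omega> = (False, True) then S else 0)"
    and "tavin_W (a, b, c) 3 = (\<lambda>\<omega>. if \<omega> = (False, False) then S else 0)"
  using assms by (auto simp: fun_eq_iff tavin_W_def tavin_pi_def tavin_I_def)

lemma expectation_tavin_W:
  assumes "0 \<le> p1" "p1 \<le> 1" "0 \<le> p2" "p2 \<le> 1" "0 < a" "0 < b" "0 < c"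
  defines "S \<equiv> a + b + c"
  shows "measure_pmf.expectation (tavin_dist p1 p2) (tavin_W (a, b, c) 1) =
           S * (p1 * p2 * (a / (a + b)) + p1 * (1 - p2))"
    and "measure_pmf.expectation (tavin_dist p1 p2) (tavin_W (a, b, c) 2) =
           S * (p1 * p2 * (b / (a + b)) + (1 - p1) * p2)"
    and "measure_pmf.expectation (tavin_dist p1 p2) (tavin_W (a, b, c) 3) =
           S * ((1 - p1) * (1 - p2))"
  using assms(1-4) unfolding tavin_W_eq[OF assms(5-7)] S_def
  by (simp_all add: expectation_tavin_dist algebra_simps)

lemma tavin_fair_iff_equations:
  assumes "0 \<le> p1" "p1 \<le> 1" "0 \<le> p2" "p2 \<le> 1" "0 < a" "0 < b" "0 < c"
  defines "S \<equiv> a + b + c"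
  shows "tavin_fair p1 p2 (a, b, c) \<longleftrightarrow>
           S * (p1 * p2 * (a / (a + b)) + p1 * (1 - p2)) = a \<and>
           S * (p1 * p2 * (b / (a + b)) + (1 - p1) * p2) = b \<and>
           S * ((1 - p1) * (1 - p2)) = c"
  using expectation_tavin_W[OF assms(1-7)]
  by (simp add: tavin_fair_def tavin_pi_def S_def del: One_nat_def)

lemma tavin_success_probs_pos:
  fixes p1 p2 :: real
  assumes "0 < p1" "p1 < 1" "0 < p2" "p2 < 1"
  defines "q1 \<equiv> 1 - p1" and "q2 \<equiv> 1 - p2"
  shows "0 < p1 * q2 + p2 * q1" and "0 < 1 - q1 * q2"
proof -
  show "0 < p1 * q2 + p2 * q1"
    unfolding q1_def q2_def using assms(1-4) by (simp add: add_pos_pos)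
  have "q1 * q2 < 1 * 1"
    unfolding q1_def q2_def using assms(1-4) by (intro mult_strict_mono) auto
  then show "0 < 1 - q1 * q2" by simp
qed

lemma tavin_fair_equations_iff_linear:
  fixes p1 p2 a b c :: real
  assumes "0 < p1" "p1 < 1" "0 < p2" "p2 < 1" "0 < a" "0 < b" "0 < c"
  defines "q1 \<equiv> 1 - p1" and "q2 \<equiv> 1 - p2" and "S \<equiv> a + b + c"
  shows "(S * (p1 * p2 * (a / (a + b)) + p1 * q2) = a \<and>
          S * (p1 * p2 * (b / (a + b)) + q1 * p2) = b \<and>
          S * (q1 * q2) = c) \<longleftrightarrow>
         (c * (1 - q1 * q2) = q1 * q2 * (a + b) \<and>
          a * (p1 * q2 + p2 * q1) = p1 * q2 * (a + b) \<and>
          b * (p1 * q2 + p2 * q1) = q1 * p2 * (a + b))"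
proof -
  define r where "r = 1 - q1 * q2"
  define D where "D = p1 * q2 + p2 * q1"
  have "0 < D" "0 < r"
    using tavin_success_probs_pos[OF assms(1-4)] unfolding D_def r_def q1_def q2_def .
  have r_eq: "r = D + p1 * p2"
    unfolding r_def D_def q1_def q2_def by (simp add: algebra_simps)
  have c_eq: "S * (q1 * q2) = c \<longleftrightarrow> c * r = q1 * q2 * (a + b)"
    unfolding S_def r_def by (auto simp: algebra_simps)
  have share_eq: "S * (p1 * p2 * (x / (a + b)) + k) = x \<longleftrightarrow> x * D = k * (a + b)"
    if "c * r = q1 * q2 * (a + b)" for x k
  proof -
    have "S * r = a + b"
      using that unfolding S_def r_def by (simp add: algebra_simps)
    have "S * (p1 * p2 * (x / (a + b)) + k) = x \<longleftrightarrow>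
          S * r * (p1 * p2 * (x / (a + b)) + k) = r * x"
      using \<open>0 < r\<close> by simp
    also have "\<dots> \<longleftrightarrow> p1 * p2 * x + k * (a + b) = r * x"
    proof -
      have "(a + b) * (p1 * p2 * (x / (a + b)) + k) = p1 * p2 * x + k * (a + b)"
        using assms(5,6) by (simp add: field_simps)
      then show ?thesis
        using \<open>S * r = a + b\<close> by simp
    qed
    also have "\<dots> \<longleftrightarrow> x * D = k * (a + b)"
      using r_eq by (auto simp: algebra_simps)
    finally show ?thesis .
  qed
  show ?thesis
    unfolding r_def[symmetric] D_def[symmetric] using c_eq share_eq by auto
qed

lemma tavin_linear_iff_closed_form:
  fixes p1 p2 a b c :: real
  assumes "0 < p1" "p1 < 1" "0 < p2" "p2 < 1"
  defines "q1 \<equiv> 1 - p1" and "q2 \<equiv> 1 - p2"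
  shows "(c * (1 - q1 * q2) = q1 * q2 * (a + b) \<and>
          a * (p1 * q2 + p2 * q1) = p1 * q2 * (a + b) \<and>
          b * (p1 * q2 + p2 * q1) = q1 * p2 * (a + b)) \<longleftrightarrow>
         (a = c * (p1 / q1) * ((1 - q1 * q2) / (p1 * q2 + p2 * q1)) \<and>
          b = c * (p2 / q2) * ((1 - q1 * q2) / (p1 * q2 + p2 * q1)))"
proof -
  define r where "r = 1 - q1 * q2"
  define D where "D = p1 * q2 + p2 * q1"
  have "0 < q1" "0 < q2"
    unfolding q1_def q2_def using assms(1-4) by auto
  have "0 < D"
    using tavin_success_probs_pos(1)[OF assms(1-4)] unfolding D_def q1_def q2_def .
  show ?thesis
    unfolding r_def[symmetric] D_def[symmetric]
  proof
    assume "c * r = q1 * q2 * (a + b) \<and> a * D = p1 * q2 * (a + b) \<and> b * D = q1 * p2 * (a + b)"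
    then have "q1 * (a * D) = p1 * (c * r)" "q2 * (b * D) = p2 * (c * r)"
      by (simp_all add: algebra_simps)
    then show "a = c * (p1 / q1) * (r / D) \<and> b = c * (p2 / q2) * (r / D)"
      using \<open>0 < q1\<close> \<open>0 < q2\<close> \<open>0 < D\<close> by (auto simp: field_simps)
  next
    assume "a = c * (p1 / q1) * (r / D) \<and> b = c * (p2 / q2) * (r / D)"
    then have a_eq: "q1 * (a * D) = p1 * (c * r)" and b_eq: "q2 * (b * D) = p2 * (c * r)"
      using \<open>0 < q1\<close> \<open>0 < q2\<close> \<open>0 < D\<close> by (auto simp: field_simps)
    have "q1 * q2 * (a + b) * D = q2 * (q1 * (a * D)) + q1 * (q2 * (b * D))"
      by (simp add: algebra_simps)
    also have "\<dots> = c * r * (p1 * q2 + p2 * q1)"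
      unfolding a_eq b_eq by (simp add: algebra_simps)
    also have "\<dots> = c * r * D"
      unfolding D_def ..
    finally have cr: "c * r = q1 * q2 * (a + b)"
      using \<open>0 < D\<close> by simp
    have "q1 * (a * D) = q1 * (p1 * q2 * (a + b))" "q2 * (b * D) = q2 * (q1 * p2 * (a + b))"
      using a_eq b_eq unfolding cr by (simp_all add: ac_simps)
    with cr show "c * r = q1 * q2 * (a + b) \<and> a * D = p1 * q2 * (a + b) \<and> b * D = q1 * p2 * (a + b)"
      using \<open>0 < q1\<close> \<open>0 < q2\<close> by simp
  qed
qed

theorem mainTheorem9:
  fixes p1 p2 :: real
  assumes "0 < p1" "p1 < 1" "0 < p2" "p2 < 1"
  defines "q1 \<equiv> 1 - p1" and "q2 \<equiv> 1 - p2"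
  shows "(\<forall>\<pi>1 \<pi>2 \<pi>3 :: real. 0 < \<pi>1 \<longrightarrow> 0 < \<pi>2 \<longrightarrow> 0 < \<pi>3 \<longrightarrow>
            (tavin_fair p1 p2 (\<pi>1, \<pi>2, \<pi>3) \<longleftrightarrow>
              (\<pi>1 = \<pi>3 * (p1 / q1) * ((1 - q1 * q2) / (p1 * q2 + p2 * q1)) \<and>
               \<pi>2 = \<pi>3 * (p2 / q2) * ((1 - q1 * q2) / (p1 * q2 + p2 * q1)))))
         \<and> {(\<pi>1, \<pi>2, \<pi>3) | \<pi>1 \<pi>2 \<pi>3 :: real. 0 < \<pi>1 \<and> 0 < \<pi>2 \<and> 0 < \<pi>3 \<and>
                                     tavin_fair p1 p2 (\<pi>1, \<pi>2, \<pi>3)}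
           = {(\<pi>3 * (p1 / q1) * ((1 - q1 * q2) / (p1 * q2 + p2 * q1)),
               \<pi>3 * (p2 / q2) * ((1 - q1 * q2) / (p1 * q2 + p2 * q1)), \<pi>3) | \<pi>3 :: real. 0 < \<pi>3}"
proof -
  have fair_iff: "tavin_fair p1 p2 (a, b, c) \<longleftrightarrow>
      a = c * (p1 / q1) * ((1 - q1 * q2) / (p1 * q2 + p2 * q1)) \<and>
      b = c * (p2 / q2) * ((1 - q1 * q2) / (p1 * q2 + p2 * q1))"
    if "0 < a" "0 < b" "0 < c" for a b c
    using tavin_fair_iff_equations[of p1 p2 a b c] tavin_fair_equations_iff_linear[of p1 p2 a b c]
      tavin_linear_iff_closed_form[of p1 p2 c a b] assms that
    unfolding q1_def q2_def by simp
  have closed_form_pos: "0 < c * (p1 / q1) * ((1 - q1 * q2) / (p1 * q2 + p2 * q1))"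
       "0 < c * (p2 / q2) * ((1 - q1 * q2) / (p1 * q2 + p2 * q1))" if "0 < c" for c
    using tavin_success_probs_pos[OF assms(1-4)] assms(1-4) that
    unfolding q1_def q2_def by simp_all
  show ?thesis
    using fair_iff closed_form_pos by fastforce
qed

end
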